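(* Let $n,k$ be positive integers, $m=kn+1$, and let $\Delta$ be a $\Gamma_{m,n}$-semimodule. If $a$ is an $m$-generator of $\Delta$, then for every integer $l>0$ the integer interval $[a-l(kn+1),\,a-lkn-1]$ has empty intersection with $\Delta$.
   Context: $\Gamma_{m,n}=\{am+bn:a,b\in\mathbb{Z}_{\ge0}\}$ for coprime positive $m,n$. A $\Gamma_{m,n}$-semimodule is a subset $\Delta\subset\mathbb{Z}_{\ge0}$ with $\Delta+\Gamma_{m,n}\subset\Delta$. An $m$-generator of $\Delta$ is an element $a\in\Delta$ with $a-m\notin\Delta$. *)

theory Defs
  imports Main
begin

definition Gamma :: "nat \<Rightarrow> nat \<Rightarrow> nat set" where
  "Gamma m n = {a * m + b * n | a b. True}"

definition is_semimodule :: "nat \<Rightarrow> nat \<Rightarrow> nat set \<Rightarrow> bool" where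
  "is_semimodule m n \<Delta> \<longleftrightarrow> (\<forall>d\<in>\<Delta>. \<forall>g\<in>Gamma m n. d + g \<in> \<Delta>)"

text \<open>An m-generator: a in Delta with a - m not in Delta (as integers; a - m < 0 counts as not in Delta).\<close>
definition is_m_generator :: "nat \<Rightarrow> nat set \<Rightarrow> nat \<Rightarrow> bool" where
  "is_m_generator m \<Delta> a \<longleftrightarrow> a \<in> \<Delta> \<and> int a - int m \<notin> int ` \<Delta>"

end

theory Submission
  imports Defs
begin

text \<open>Write an element x of the interval as x = a - l k n - j with 1 \<le> j \<le> l. Then
  (a - m) - x = (j - 1)(k n + 1) + (l - j) k n lies in Gamma m n, so x \<in> \<Delta> would force a - m \<in> \<Delta>.\<close>

lemma semimodule_add_combination:
  assumes "is_semimodule m n \<Delta>" and "x \<in> \<Delta>"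
  shows "x + (c * m + d * n) \<in> \<Delta>"
proof -
  have "c * m + d * n \<in> Gamma m n"
    unfolding Gamma_def by blast
  then show ?thesis
    using assms unfolding is_semimodule_def by blast
qed

lemma interval_point_Gamma_decomposition:
  fixes k n :: nat and a l x :: int
  assumes "0 < l"
    and "a - l * (int k * int n + 1) \<le> x" and "x \<le> a - l * int k * int n - 1"
  obtains c d :: nat where "a - (int k * int n + 1) = x + int c * (int k * int n + 1) + int d * int n"
proof -
  define j where "j = a - l * int k * int n - x"
  have "1 \<le> j" and "j \<le> l"
    using assms by (simp_all add: j_def algebra_simps)
  then have "int (nat (j - 1)) = j - 1" and "int (nat ((l - j) * int k)) = (l - j) * int k"
    by simp_all
  moreover have "a - (int k * int n + 1) = x + (j - 1) * (int k * int n + 1) + (l - j) * int k * int n"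
    by (simp add: j_def algebra_simps)
  ultimately show ?thesis
    using that[of "nat (j - 1)" "nat ((l - j) * int k)"] by simp
qed

theorem mainTheorem14:
  fixes n k m a :: nat and \<Delta> :: "nat set"
  assumes "0 < n" and "0 < k" and "m = k * n + 1"
    and "is_semimodule m n \<Delta>"
    and "is_m_generator m \<Delta> a"
  shows "\<forall>l::int. l > 0 \<longrightarrow>
           {int a - l * (int k * int n + 1) .. int a - l * int k * int n - 1} \<inter> int ` \<Delta> = {}"
proof (intro allI impI)
  fix l :: int assume "l > 0"
  show "{int a - l * (int k * int n + 1) .. int a - l * int k * int n - 1} \<inter> int ` \<Delta> = {}"
  proof (rule ccontr)
    assume "\<not> ?thesis"
    then obtain x where x: "x \<in> \<Delta>"
      and lo: "int a - l * (int k * int n + 1) \<le> int x" and hi: "int x \<le> int a - l * int k * int n - 1"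
      by auto
    obtain c d :: nat
      where decomp: "int a - (int k * int n + 1) = int x + int c * (int k * int n + 1) + int d * int n"
      using interval_point_Gamma_decomposition[OF \<open>l > 0\<close> lo hi] by blast
    have "x + (c * m + d * n) \<in> \<Delta>"
      using semimodule_add_combination[OF assms(4) x] .
    moreover have "int (x + (c * m + d * n)) = int a - int m"
      using decomp assms(3) by (simp add: algebra_simps)
    ultimately have "int a - int m \<in> int ` \<Delta>"
      by (metis image_eqI)
    then show False
      using assms(5) unfolding is_m_generator_def by blast
  qed
qed

end
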